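(* Let $\mathcal{H}$ be a complex linear space with a non-degenerate indefinite inner product $[\cdot,\cdot]$, and $\mathcal{F}_{++}=\{f\in\mathcal{H}:[f,f]>0\}$. Let $\{W(t):t\ge0\}$ be a family of linear operators on $\mathcal{H}$ with $W(0)=I$ and $W(t_1+t_2)=W(t_1)W(t_2)=W(t_2)W(t_1)$ for all $t_1,t_2\ge0$, such that each $W(t)$ maps $\mathcal{F}_{++}$ onto $\mathcal{F}_{++}$ in a one-to-one manner. For $t\ge0$ put $$\theta(t)=\inf_{f\in\mathcal{F}_{++}}\frac{[W(t)f,W(t)f]}{[f,f]}.$$ If for some $f\in\mathcal{F}_{++}$ the function $r(t)=[W(t)f,W(t)f]$ is continuous on $[0,\infty)$, then there exists $\alpha\in\mathbb{R}$ such that $\theta(t)=e^{\alpha t}$ for all $t\ge0$.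
   Context: An indefinite inner product is a Hermitian sesquilinear form $[\cdot,\cdot]$ on $\mathcal{H}$ (linear in the second argument) admitting vectors of strictly positive and strictly negative square; non-degenerate means $[f,g]=0$ for all $g$ forces $f=0$. *)

theory Defs
  imports Complex_Main
begin

text \<open>A complex linear space is represented by an abelian group type 'v together with a
scalar multiplication scale :: complex => 'v => 'v satisfying the vector space axioms.\<close>

definition hermitian_sesquilinear :: "(complex \<Rightarrow> 'v::ab_group_add \<Rightarrow> 'v) \<Rightarrow> ('v \<Rightarrow> 'v \<Rightarrow> complex) \<Rightarrow> bool" where
  "hermitian_sesquilinear scale ip \<longleftrightarrow>
     (\<forall>f g h. ip f (g + h) = ip f g + ip f h) \<and>
     (\<forall>f g c. ip f (scale c g) = c * ip f g) \<and>
     (\<forall>f g. ip g f = cnj (ip f g))"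

text \<open>Indefinite inner product: Hermitian sesquilinear form with vectors of strictly positive
and strictly negative square (squares are real by Hermitian symmetry).\<close>
definition indefinite_inner_product :: "(complex \<Rightarrow> 'v::ab_group_add \<Rightarrow> 'v) \<Rightarrow> ('v \<Rightarrow> 'v \<Rightarrow> complex) \<Rightarrow> bool" where
  "indefinite_inner_product scale ip \<longleftrightarrow>
     hermitian_sesquilinear scale ip \<and>
     (\<exists>f. Re (ip f f) > 0) \<and> (\<exists>g. Re (ip g g) < 0)"

definition non_degenerate :: "('v::zero \<Rightarrow> 'v \<Rightarrow> complex) \<Rightarrow> bool" where
  "non_degenerate ip \<longleftrightarrow> (\<forall>f. (\<forall>g. ip f g = 0) \<longrightarrow> f = 0)"

definition pos_vectors :: "('v \<Rightarrow> 'v \<Rightarrow> complex) \<Rightarrow> 'v set" where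
  "pos_vectors ip = {f. Re (ip f f) > 0}"

definition theta :: "('v \<Rightarrow> 'v \<Rightarrow> complex) \<Rightarrow> (real \<Rightarrow> 'v \<Rightarrow> 'v) \<Rightarrow> real \<Rightarrow> real" where
  "theta ip W t = (INF f\<in>pos_vectors ip. Re (ip (W t f) (W t f)) / Re (ip f f))"

end

theory Submission
  imports Defs "HOL-Analysis.Analysis"
begin

text \<open>
  For fixed \<open>t\<close>, \<open>[W(t)f, W(t)f]\<close> is again a Hermitian form, and since \<open>W(t)\<close> is linear and
  maps \<open>F\<^sub>+\<^sub>+\<close> bijectively onto itself, it has exactly the same positive vectors as \<open>[f, f]\<close>.
  Along a line \<open>n + s f\<close> through a negative vector \<open>n\<close> both forms become real quadratics in
  \<open>s\<close> with the same positivity set; the first one has two real roots, which must then be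
  roots of the second one as well. Hence \<open>[W(t)f, W(t)f] = c(t) [f, f]\<close> on \<open>F\<^sub>+\<^sub>+\<close>, so that
  \<open>\<theta>(t) = c(t)\<close>. The semigroup law makes \<open>\<theta>\<close> multiplicative, the continuity of \<open>r\<close>
  makes it continuous, and a positive continuous multiplicative function on \<open>[0, \<infinity>)\<close> is
  an exponential.
\<close>

lemma quadratics_same_positivity_cross_eq:
  fixes a b d a' b' d' :: real
  assumes "a > 0" and "d < 0"
    and same_pos: "\<And>s. a * s^2 + b * s + d > 0 \<longleftrightarrow> a' * s^2 + b' * s + d' > 0"
  shows "a' * d = a * d'"
proof -
  define e where "e = sqrt (b^2 - 4*a*d)"
  have "b^2 - 4*a*d > 0"
    using assms by (smt (verit) mult_pos_neg zero_le_power2)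
  then have e2: "e^2 = b^2 - 4*a*d" and "e > 0"
    unfolding e_def by simp_all
  define r1 where "r1 = (-b - e) / (2*a)"
  define r2 where "r2 = (-b + e) / (2*a)"
  have "r1 < r2"
    unfolding r1_def r2_def using \<open>a > 0\<close> \<open>e > 0\<close> by (simp add: divide_strict_right_mono)
  have factor: "a * s^2 + b * s + d = a * ((s - r1) * (s - r2))" for s
    unfolding r1_def r2_def using \<open>a > 0\<close> e2 by (simp add: field_simps power2_eq_square) (metis distrib_left)
  define u where "u s = a' * s^2 + b' * s + d'" for s
  \<comment> \<open>\<open>u\<close> is non-positive at \<open>r1\<close>, \<open>r2\<close>, and non-negative there as a limit from its positivity set.\<close>
  define P where "P = {s. a * s^2 + b * s + d > 0}"
  have P: "P = {..<r1} \<union> {r2<..}"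
    unfolding P_def factor using \<open>a > 0\<close> \<open>r1 < r2\<close>
    by (auto simp: zero_less_mult_iff)
  have "continuous_on (closure P) u"
    unfolding u_def by (intro continuous_intros)
  then have "u r \<ge> 0" if "r \<in> closure P" for r
    by (rule continuous_ge_on_closure) (use that same_pos in \<open>auto simp: P_def u_def\<close>)
  moreover have "r1 \<in> closure P" "r2 \<in> closure P"
    unfolding P by auto
  moreover have "u r1 \<le> 0" "u r2 \<le> 0"
    using same_pos[of r1] same_pos[of r2] factor[of r1] factor[of r2] by (auto simp: u_def)
  ultimately have "u r1 = 0" "u r2 = 0"
    by (auto intro: antisym)
  have "u r1 - u r2 = (r1 - r2) * (a' * (r1 + r2) + b')"
    unfolding u_def by (simp add: algebra_simps power2_eq_square)
  with \<open>u r1 = 0\<close> \<open>u r2 = 0\<close> \<open>r1 < r2\<close> have "b' = - a' * (r1 + r2)"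
    by simp
  with \<open>u r1 = 0\<close> have "d' = a' * (r1 * r2)"
    unfolding u_def by (simp add: algebra_simps power2_eq_square)
  then show ?thesis
    using factor[of 0] by simp
qed

lemma closure_nonneg_Rats: "closure ({0::real..} \<inter> \<rat>) = {0..}"
  by (simp add: closure_convex_Int_superset Rats_closure_real)

lemma continuous_additive_on_nonneg_linear:
  fixes g :: "real \<Rightarrow> real"
  assumes cont: "continuous_on {0..} g"
    and add: "\<And>s t. s \<ge> 0 \<Longrightarrow> t \<ge> 0 \<Longrightarrow> g (s + t) = g s + g t"
    and "t \<ge> 0"
  shows "g t = g 1 * t"
proof -
  have mult_nat: "g (real n * s) = real n * g s" if "s \<ge> 0" for n s
  proof (induction n)
    case 0
    show ?case using add[of 0 0] by simp
  next
    case (Suc n)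
    have "g (real (Suc n) * s) = g (s + real n * s)"
      by (simp add: algebra_simps)
    also have "\<dots> = g s + real n * g s"
      using that add[of s "real n * s"] Suc by simp
    finally show ?case
      by (simp add: algebra_simps)
  qed
  have rat: "g r - g 1 * r = 0" if "r \<in> {0..} \<inter> \<rat>" for r
  proof -
    have "r \<ge> 0" "r \<in> \<rat>"
      using that by auto
    then obtain m n :: nat where "n \<noteq> 0" and r: "r = real m / real n"
      using Rats_abs_nat_div_natE[of r] by (metis abs_of_nonneg of_nat_0_less_iff less_irrefl)
    then have "real n * r = real m"
      by simp
    have "real n * g r = g (real n * r)"
      using mult_nat[OF \<open>r \<ge> 0\<close>] by simp
    also have "\<dots> = real n * r * g 1"
      using \<open>real n * r = real m\<close> mult_nat[of 1 m] by simp
    finally show ?thesis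
      using \<open>n \<noteq> 0\<close> by (simp add: algebra_simps)
  qed
  have cont_diff: "continuous_on (closure ({0..} \<inter> \<rat>)) (\<lambda>r. g r - g 1 * r)"
    unfolding closure_nonneg_Rats by (intro continuous_intros cont)
  have "t \<in> closure ({0..} \<inter> \<rat>)"
    using \<open>t \<ge> 0\<close> by (simp add: closure_nonneg_Rats)
  with cont_diff rat have "g t - g 1 * t = 0"
    by (rule continuous_constant_on_closure)
  then show ?thesis
    by simp
qed

lemma continuous_multiplicative_on_nonneg_exp:
  fixes h :: "real \<Rightarrow> real"
  assumes cont: "continuous_on {0..} h"
    and pos: "\<And>t. t \<ge> 0 \<Longrightarrow> h t > 0"
    and mult: "\<And>s t. s \<ge> 0 \<Longrightarrow> t \<ge> 0 \<Longrightarrow> h (s + t) = h s * h t"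
  shows "\<exists>\<alpha>. \<forall>t\<ge>0. h t = exp (\<alpha> * t)"
proof (intro exI allI impI)
  fix t :: real
  assume "t \<ge> 0"
  have "continuous_on {0..} (\<lambda>t. ln (h t))"
    by (intro continuous_intros cont) (use pos in fastforce)
  moreover have "ln (h (s + t)) = ln (h s) + ln (h t)" if "s \<ge> 0" "t \<ge> 0" for s t
    using that pos[of s] pos[of t] by (simp add: mult ln_mult)
  ultimately have "ln (h t) = ln (h 1) * t"
    using \<open>t \<ge> 0\<close> by (rule continuous_additive_on_nonneg_linear)
  then show "h t = exp (ln (h 1) * t)"
    using pos[OF \<open>t \<ge> 0\<close>] by (metis exp_ln)
qed

lemma hermitian_sesquilinear_compose_linear:
  fixes scale :: "complex \<Rightarrow> 'v::ab_group_add \<Rightarrow> 'v"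
  assumes "hermitian_sesquilinear scale ip" and "Vector_Spaces.linear scale scale T"
  shows "hermitian_sesquilinear scale (\<lambda>f g. ip (T f) (T g))"
proof -
  have T: "T (f + g) = T f + T g" "T (scale c f) = scale c (T f)" for f g c
    using assms(2) unfolding Vector_Spaces.linear_iff by blast+
  show ?thesis
    using assms(1) unfolding hermitian_sesquilinear_def T by blast
qed

lemma hermitian_sesquilinear_line_expand:
  fixes scale :: "complex \<Rightarrow> 'v::ab_group_add \<Rightarrow> 'v"
  assumes "hermitian_sesquilinear scale ip"
  shows "Re (ip (y + scale (of_real s) x) (y + scale (of_real s) x))
         = Re (ip x x) * s^2 + Re (ip y x + ip x y) * s + Re (ip y y)"
proof -
  have add_right: "ip f (g + h) = ip f g + ip f h"
    and scale_right: "ip f (scale c g) = c * ip f g"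
    and sym: "ip g f = cnj (ip f g)" for f g h c
    using assms unfolding hermitian_sesquilinear_def by blast+
  have add_left: "ip (f + g) h = ip f h + ip g h" for f g h
    by (metis add_right complex_cnj_add sym)
  have scale_left: "ip (scale c f) h = cnj c * ip f h" for f h c
    by (metis scale_right complex_cnj_mult sym)
  have "ip (y + scale (of_real s) x) (y + scale (of_real s) x)
        = ip y y + of_real s * ip y x + of_real s * ip x y + of_real s * of_real s * ip x x"
    by (simp add: add_left add_right scale_left scale_right algebra_simps)
  then show ?thesis
    by (simp add: power2_eq_square algebra_simps)
qed

lemma pos_vectors_small_step:
  fixes scale :: "complex \<Rightarrow> 'v::ab_group_add \<Rightarrow> 'v"
  assumes "hermitian_sesquilinear scale ip" and "f \<in> pos_vectors ip"
  obtains s :: real where "s > 0" and "f + scale (of_real s) g \<in> pos_vectors ip"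
proof -
  define A where "A = Re (ip f f)"
  define B where "B = Re (ip f g + ip g f)"
  define C where "C = Re (ip g g)"
  have "((\<lambda>s. C * s^2 + B * s + A) \<longlongrightarrow> C * 0^2 + B * 0 + A) (at_right 0)"
    by (intro tendsto_intros)
  moreover have "A > 0"
    using assms(2) by (simp add: A_def pos_vectors_def)
  ultimately have "\<forall>\<^sub>F s in at_right 0. C * s^2 + B * s + A > 0"
    by (simp add: order_tendstoD(1))
  moreover have "\<forall>\<^sub>F s in at_right (0::real). s > 0"
    by (simp add: eventually_at_right_less)
  ultimately have "\<forall>\<^sub>F s in at_right 0. s > 0 \<and> C * s^2 + B * s + A > 0"
    by (rule eventually_conj[rotated])
  then obtain s where "s > 0" "C * s^2 + B * s + A > 0"
    using eventually_happens'[OF trivial_limit_at_right_real] by blast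
  moreover have "Re (ip (f + scale (of_real s) g) (f + scale (of_real s) g)) = C * s^2 + B * s + A"
    unfolding A_def B_def C_def by (rule hermitian_sesquilinear_line_expand[OF assms(1)])
  ultimately show ?thesis
    using that by (simp add: pos_vectors_def)
qed

lemma linear_bij_pos_vectors_iff:
  fixes scale :: "complex \<Rightarrow> 'v::ab_group_add \<Rightarrow> 'v"
  assumes vs: "vector_space scale" and herm: "hermitian_sesquilinear scale ip"
    and lin: "Vector_Spaces.linear scale scale T"
    and bij: "bij_betw T (pos_vectors ip) (pos_vectors ip)"
  shows "T z \<in> pos_vectors ip \<longleftrightarrow> z \<in> pos_vectors ip"
proof
  assume "z \<in> pos_vectors ip"
  then show "T z \<in> pos_vectors ip"
    using bij_betwE[OF bij] by blast
next
  interpret vector_space scale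
    by (rule vs)
  have T: "T (f + g) = T f + T g" "T (scale c f) = scale c (T f)" for f g c
    using lin unfolding Vector_Spaces.linear_iff by blast+
  assume "T z \<in> pos_vectors ip"
  then have "T z \<in> T ` pos_vectors ip"
    using bij_betw_imp_surj_on[OF bij] by simp
  then obtain z' where z': "z' \<in> pos_vectors ip" "T z' = T z"
    by (metis imageE)
  \<comment> \<open>A kernel vector \<open>k \<noteq> 0\<close> would give distinct positive vectors \<open>z'\<close>, \<open>z' + s k\<close> with equal images.\<close>
  define k where "k = z - z'"
  have "T k = 0"
    using z'(2) T(1)[of z' k] by (simp add: k_def)
  obtain s :: real where "s > 0" and pos: "z' + scale (of_real s) k \<in> pos_vectors ip"
    using pos_vectors_small_step[OF herm z'(1)] .
  have "T (z' + scale (of_real s) k) = T z'"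
    using \<open>T k = 0\<close> by (simp add: T)
  then have "z' + scale (of_real s) k = z'"
    using inj_onD[OF bij_betw_imp_inj_on[OF bij]] pos z'(1) by blast
  then have "k = 0"
    using \<open>s > 0\<close> by simp
  then show "z \<in> pos_vectors ip"
    using z'(1) by (simp add: k_def)
qed

lemma indefinite_same_pos_vectors_proportional:
  fixes scale :: "complex \<Rightarrow> 'v::ab_group_add \<Rightarrow> 'v"
  assumes indef: "indefinite_inner_product scale ip"
    and herm': "hermitian_sesquilinear scale ip'"
    and same_pos: "pos_vectors ip' = pos_vectors ip"
  shows "\<exists>c>0. \<forall>f\<in>pos_vectors ip. Re (ip' f f) = c * Re (ip f f)"
proof -
  have herm: "hermitian_sesquilinear scale ip"
    using indef by (simp add: indefinite_inner_product_def)
  obtain n where n: "Re (ip n n) < 0"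
    using indef by (auto simp: indefinite_inner_product_def)
  obtain x where x: "Re (ip x x) > 0"
    using indef by (auto simp: indefinite_inner_product_def)
  have same_sign: "0 < Re (ip' g g) \<longleftrightarrow> 0 < Re (ip g g)" for g
    using same_pos by (simp add: set_eq_iff pos_vectors_def)
  define c where "c = Re (ip' n n) / Re (ip n n)"
  have proportional: "Re (ip' f f) = c * Re (ip f f)" if "f \<in> pos_vectors ip" for f
  proof -
    have "Re (ip' f f) * Re (ip n n) = Re (ip f f) * Re (ip' n n)"
    proof (rule quadratics_same_positivity_cross_eq)
      show "Re (ip f f) > 0"
        using that by (simp add: pos_vectors_def)
      show "Re (ip f f) * s^2 + Re (ip n f + ip f n) * s + Re (ip n n) > 0 \<longleftrightarrow>
            Re (ip' f f) * s^2 + Re (ip' n f + ip' f n) * s + Re (ip' n n) > 0" for s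
        using same_sign[of "n + scale (of_real s) f"]
        unfolding hermitian_sesquilinear_line_expand[OF herm] hermitian_sesquilinear_line_expand[OF herm'] by simp
    qed (use n in simp)
    then show ?thesis
      using n by (simp add: c_def field_simps)
  qed
  have "c > 0"
    using proportional[of x] x same_sign[of x] by (simp add: pos_vectors_def zero_less_mult_iff)
  with proportional show ?thesis
    by blast
qed

lemma theta_eq_scaling_factor:
  assumes "pos_vectors ip \<noteq> {}"
    and "\<forall>f\<in>pos_vectors ip. Re (ip (W t f) (W t f)) = c * Re (ip f f)"
  shows "theta ip W t = c"
proof -
  have "theta ip W t = (INF f\<in>pos_vectors ip. c)"
    unfolding theta_def using assms(2) by (intro INF_cong) (auto simp: pos_vectors_def)
  also have "\<dots> = c"
    using assms(1) by simp
  finally show ?thesis .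
qed

lemma theta_scales_pos_vectors:
  fixes scale :: "complex \<Rightarrow> 'v::ab_group_add \<Rightarrow> 'v"
  assumes vs: "vector_space scale" and indef: "indefinite_inner_product scale ip"
    and lin: "Vector_Spaces.linear scale scale (W t)"
    and bij: "bij_betw (W t) (pos_vectors ip) (pos_vectors ip)"
  shows "theta ip W t > 0"
    and "\<forall>f\<in>pos_vectors ip. Re (ip (W t f) (W t f)) = theta ip W t * Re (ip f f)"
proof -
  have herm: "hermitian_sesquilinear scale ip"
    using indef by (simp add: indefinite_inner_product_def)
  have "pos_vectors (\<lambda>f g. ip (W t f) (W t g)) = pos_vectors ip"
    using linear_bij_pos_vectors_iff[OF vs herm lin bij] by (auto simp: pos_vectors_def)
  then obtain c where "c > 0" and c: "\<forall>f\<in>pos_vectors ip. Re (ip (W t f) (W t f)) = c * Re (ip f f)"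
    using indefinite_same_pos_vectors_proportional[OF indef hermitian_sesquilinear_compose_linear[OF herm lin]]
    by blast
  moreover have "pos_vectors ip \<noteq> {}"
    using indef by (auto simp: indefinite_inner_product_def pos_vectors_def)
  ultimately have "theta ip W t = c"
    by (intro theta_eq_scaling_factor)
  with \<open>c > 0\<close> c show "theta ip W t > 0"
    and "\<forall>f\<in>pos_vectors ip. Re (ip (W t f) (W t f)) = theta ip W t * Re (ip f f)"
    by simp_all
qed

theorem theorem2p6:
  fixes scale :: "complex \<Rightarrow> 'v::ab_group_add \<Rightarrow> 'v"
    and ip :: "'v \<Rightarrow> 'v \<Rightarrow> complex"
    and W :: "real \<Rightarrow> 'v \<Rightarrow> 'v"
  assumes "vector_space scale"
    and "indefinite_inner_product scale ip"
    and "non_degenerate ip"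
    and "\<And>t. t \<ge> 0 \<Longrightarrow> Vector_Spaces.linear scale scale (W t)"
    and "W 0 = id"
    and "\<And>t1 t2. t1 \<ge> 0 \<Longrightarrow> t2 \<ge> 0 \<Longrightarrow>
           W (t1 + t2) = W t1 \<circ> W t2 \<and> W t1 \<circ> W t2 = W t2 \<circ> W t1"
    and "\<And>t. t \<ge> 0 \<Longrightarrow> bij_betw (W t) (pos_vectors ip) (pos_vectors ip)"
    and "\<exists>f\<in>pos_vectors ip. continuous_on {0..} (\<lambda>t. Re (ip (W t f) (W t f)))"
  shows "\<exists>\<alpha>::real. \<forall>t\<ge>0. theta ip W t = exp (\<alpha> * t)"
proof -
  define q where "q f = Re (ip f f)" for f
  have theta_pos: "theta ip W t > 0"
    and theta_scales: "\<forall>f\<in>pos_vectors ip. q (W t f) = theta ip W t * q f" if "t \<ge> 0" for t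
    using theta_scales_pos_vectors[where W = W and t = t, OF assms(1,2) assms(4)[OF that] assms(7)[OF that]]
    unfolding q_def by blast+
  obtain f where f: "f \<in> pos_vectors ip" and cont: "continuous_on {0..} (\<lambda>t. q (W t f))"
    using assms(8) unfolding q_def by blast
  have "q f > 0"
    using f by (simp add: pos_vectors_def q_def)
  show ?thesis
  proof (rule continuous_multiplicative_on_nonneg_exp)
    have "continuous_on {0..} (\<lambda>t. q (W t f) / q f)"
      using \<open>q f > 0\<close> by (intro continuous_intros cont) simp
    moreover have "q (W t f) / q f = theta ip W t" if "t \<in> {0..}" for t
      using theta_scales[of t] that f \<open>q f > 0\<close> by simp
    ultimately show "continuous_on {0..} (theta ip W)"
      by (rule continuous_on_eq)
  next
    fix s t :: real
    assume "s \<ge> 0" "t \<ge> 0"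
    have "theta ip W (s + t) * q f = q (W s (W t f))"
      using theta_scales[of "s + t"] f \<open>s \<ge> 0\<close> \<open>t \<ge> 0\<close> conjunct1[OF assms(6)[of s t]] by simp
    also have "\<dots> = theta ip W s * theta ip W t * q f"
      using theta_scales \<open>s \<ge> 0\<close> \<open>t \<ge> 0\<close> f bij_betwE[OF assms(7)] by simp
    finally show "theta ip W (s + t) = theta ip W s * theta ip W t"
      using \<open>q f > 0\<close> by simp
  qed (fact theta_pos)
qed

end
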